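(* Let $n,r\in\mathbb{N}$, $k\in\mathbb{N}\cup\{0\}$, and let $U\in\mathbb{C}^{2^{n+r+k}\times 2^{n+r+k}}$ be unitary. Let $\mathcal{C}_{(U,k)}$ be the linear map on $(n+r)$-qubit operators given by $\mathcal{C}_{(U,k)}(\rho)=U(\rho\otimes|0^k\rangle\langle 0^k|)U^\dagger$, regarded as a map $\mathcal{L}(\mathcal{H}_{A_I}\otimes\mathcal{H}_P)\to\mathcal{L}(\mathcal{H}_{A_O}\otimes\mathcal{H}_F)$ with $\mathcal{H}_{A_I}=\mathcal{H}_{A_O}=\mathcal{S}(n)$ (the first $n$ qubits), $\mathcal{H}_P=\mathcal{S}(r)$, $\mathcal{H}_F=\mathcal{S}(r+k)$. Let $W=\mathbf{CJ}(\mathcal{C}_{(U,k)})$ and let $U_G=\mathrm{tr}_{\mathcal{H}_{A_I}}(U)\in\mathbb{C}^{2^{r+k}\times2^{r+k}}$ (the partial trace of the matrix $U$ over its first $n$ qubits). Define the linear map $\mathcal{C}_{(U_G,k)}:\mathcal{L}(\mathcal{S}(r))\to\mathcal{L}(\mathcal{S}(r+k))$ by $\mathcal{C}_{(U_G,k)}(\sigma)=U_G(\sigma\otimes|0^k\rangle\langle0^k|)U_G^\dagger$. Then $$G_{W,A_I,A_O}=\mathbf{CJ}(\mathcal{C}_{(U_G,k)}).$$ In particular, if $\mathcal{C}_{(U_G,k)}$ is CPTP, then $W$ is a process matrix with respect to $\mathcal{H}_{A_I},\mathcal{H}_{A_O}$, and for every quantum circuit $C$ implementing the channel $\mathcal{C}_{(U,k)}$,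 the pair $(n,C)$ is a PMG with $\mathbf{PMO}_{(n,C)}=\mathcal{C}_{(U_G,k)}$.
   Context: $\mathcal{S}(n)=\mathbb{C}^{2^n}$ with computational basis $\{|x\rangle:x\in\{0,1\}^n\}$. Partial trace: for an operator $M$ on $\mathcal{H}_0\otimes\mathcal{H}_1$ with $\mathcal{H}_0=\mathcal{S}(n)$ (not necessarily a density operator), $\mathrm{tr}_{\mathcal{H}_0}(M)=\sum_{x\in\{0,1\}^n}(\langle x|\otimes I)M(|x\rangle\otimes I)$. Choi–Jamiołkowski (CJ): for a linear map $\mathcal{C}:\mathcal{L}(\mathcal{S}(a))\to\mathcal{L}(\mathcal{S}(b))$, $\mathbf{CJ}(\mathcal{C})=\sum_{x,y\in\{0,1\}^a}|x\rangle\langle y|\otimes\mathcal{C}(|x\rangle\langle y|)$. For $M\in\mathcal{L}(\mathcal{H}_0\otimes\mathcal{H}_1)$, $\mathbf{CJ}^{-1}(M,\mathcal{H}_0,\mathcal{H}_1)$ is the unique linear map $\mathcal{L}(\mathcal{H}_0)\to\mathcal{L}(\mathcal{H}_1)$ whose CJ operator is $M$ (explicitly $X\mapsto\mathrm{tr}_{\mathcal{H}_0}((X^{T}\otimes I)M)$). Indefinite operator: for $W$ an operator on $\mathcal{H}_{A_I}\otimes\mathcal{H}_P\otimes\mathcal{H}_{A_O}\otimes\mathcal{H}_F$ with $\mathcal{H}_{A_I}=\mathcal{H}_{A_O}=\mathcal{S}(n)$, let $K=\sum_{x\in\{0,1\}^n}|x\rangle_{A_I}\otimes I_P\otimes|x\rangle_{A_O}\otimes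 I_F$ and $G_{W,A_I,A_O}=\mathrm{tr}_{A_I,A_O}(W K K^\dagger)$, an operator on $\mathcal{H}_P\otimes\mathcal{H}_F$. Define $\mathbf{PMO}(W,\mathcal{H}_{A_I},\mathcal{H}_{A_O})=\mathbf{CJ}^{-1}(G_{W,A_I,A_O},\mathcal{H}_P,\mathcal{H}_F)$; $W$ is a process matrix with respect to $\mathcal{H}_{A_I},\mathcal{H}_{A_O}$ if this map is completely positive and trace-preserving (CPTP). Quantum circuits: an $a$-to-$b$ quantum circuit is built from gates of a fixed constant-size set of single-qubit gates, CNOT, SWAP, Toffoli, measurements and $|0\rangle$ ancillas, mapping $a$-qubit mixed states to $b$-qubit mixed states; $\mathcal{C}_C$ denotes the channel it implements. Process matrix generator (PMG): for $n\ge1$, $r,\ell\ge0$ and an $(n+r)$-to-$(n+\ell)$ circuit $C$, regard $\mathcal{C}_C$ as a map $\mathcal{L}(\mathcal{H}_{A_I}\otimes\mathcal{H}_P)\to\mathcal{L}(\mathcal{H}_{A_O}\otimes\mathcal{H}_F)$ with $\mathcal{H}_{A_I}=\mathcal{H}_{A_O}=\mathcal{S}(n)$ (first $n$ qubits), $\mathcal{H}_P=\mathcal{S}(r)$, $\mathcal{H}_F=\mathcal{S}(\ell)$; set $\mathbf{PMO}_{(n,C)}=\mathbf{PMO}(\mathbf{CJ}(\mathcal{C}_C),\mathcal{H}_{A_I},\mathcal{H}_{A_O})$; $(n,C)$ is a PMG if $\mathbf{PMO}_{(n,C)}$ is CPTP. *)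

theory Defs
  imports Complex_Main "Jordan_Normal_Form.Matrix"
begin

text \<open>An operator on S(n) = C^(2^n) is a complex 2^n x 2^n matrix
(Jordan_Normal_Form type complex mat) w.r.t. the computational basis, basis state |x>
having index x < 2^n (binary encoding, first qubit most significant).  Tensor products
are Kronecker products, so the first factor is the most significant part of an index.
Linear maps L(S(a)) -> L(S(b)) are represented as functions complex mat => complex mat
(only their values on 2^a x 2^a matrices matter).\<close>

definition kron :: "complex mat \<Rightarrow> complex mat \<Rightarrow> complex mat" where
  "kron A B = mat (dim_row A * dim_row B) (dim_col A * dim_col B)
     (\<lambda>(i,j). A $$ (i div dim_row B, j div dim_col B) * B $$ (i mod dim_row B, j mod dim_col B))"

definition dagger :: "complex mat \<Rightarrow> complex mat" where
  "dagger A = mat (dim_col A) (dim_row A) (\<lambda>(i,j). cnj (A $$ (j,i)))"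

definition unitary_mat :: "nat \<Rightarrow> complex mat \<Rightarrow> bool" where
  "unitary_mat d U \<longleftrightarrow> U \<in> carrier_mat d d \<and> U * dagger U = 1\<^sub>m d \<and> dagger U * U = 1\<^sub>m d"

definition mtrace :: "complex mat \<Rightarrow> complex" where
  "mtrace A = (\<Sum>i<dim_row A. A $$ (i,i))"

definition msum :: "nat \<Rightarrow> nat \<Rightarrow> ('i \<Rightarrow> complex mat) \<Rightarrow> 'i set \<Rightarrow> complex mat" where
  "msum nr nc f S = mat nr nc (\<lambda>ij. \<Sum>x\<in>S. f x $$ ij)"

definition ketbra :: "nat \<Rightarrow> nat \<Rightarrow> nat \<Rightarrow> complex mat" where
  "ketbra d x y = mat d d (\<lambda>(i,j). if i = x \<and> j = y then 1 else 0)"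

definition ket :: "nat \<Rightarrow> nat \<Rightarrow> complex mat" where
  "ket d x = mat d 1 (\<lambda>(i,j). if i = x then 1 else 0)"

definition ptrace1 :: "nat \<Rightarrow> nat \<Rightarrow> complex mat \<Rightarrow> complex mat" where
  "ptrace1 d0 d1 M = msum d1 d1
     (\<lambda>x. dagger (kron (ket d0 x) (1\<^sub>m d1)) * M * kron (ket d0 x) (1\<^sub>m d1)) {..<d0}"

definition CJ :: "nat \<Rightarrow> nat \<Rightarrow> (complex mat \<Rightarrow> complex mat) \<Rightarrow> complex mat" where
  "CJ da db C = msum (da*db) (da*db)
     (\<lambda>(x,y). kron (ketbra da x y) (C (ketbra da x y))) ({..<da} \<times> {..<da})"

definition CJinv :: "nat \<Rightarrow> nat \<Rightarrow> complex mat \<Rightarrow> complex mat \<Rightarrow> complex mat" where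
  "CJinv d0 d1 M = (\<lambda>X. ptrace1 d0 d1 (kron (transpose_mat X) (1\<^sub>m d1) * M))"

text \<open>Indefinite operator. W acts on A_I (x) P (x) A_O (x) F with dims dA, dP, dA, dF.\<close>
definition Kmat :: "nat \<Rightarrow> nat \<Rightarrow> nat \<Rightarrow> complex mat" where
  "Kmat dA dP dF = msum (dA*dP*dA*dF) (dP*dF)
     (\<lambda>x. kron (kron (kron (ket dA x) (1\<^sub>m dP)) (ket dA x)) (1\<^sub>m dF)) {..<dA}"

definition ptrace_AIAO :: "nat \<Rightarrow> nat \<Rightarrow> nat \<Rightarrow> complex mat \<Rightarrow> complex mat" where
  "ptrace_AIAO dA dP dF M = msum (dP*dF) (dP*dF)
     (\<lambda>(x,y). let V = kron (kron (kron (ket dA x) (1\<^sub>m dP)) (ket dA y)) (1\<^sub>m dF)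
              in dagger V * M * V) ({..<dA} \<times> {..<dA})"

definition Gop :: "nat \<Rightarrow> nat \<Rightarrow> nat \<Rightarrow> complex mat \<Rightarrow> complex mat" where
  "Gop dA dP dF W = ptrace_AIAO dA dP dF (W * Kmat dA dP dF * dagger (Kmat dA dP dF))"

definition PMO :: "nat \<Rightarrow> nat \<Rightarrow> nat \<Rightarrow> complex mat \<Rightarrow> complex mat \<Rightarrow> complex mat" where
  "PMO dA dP dF W = CJinv dP dF (Gop dA dP dF W)"

definition psd :: "nat \<Rightarrow> complex mat \<Rightarrow> bool" where
  "psd d A \<longleftrightarrow> A \<in> carrier_mat d d \<and>
     (\<forall>v \<in> carrier_vec d. let q = conjugate v \<bullet> (A *\<^sub>v v) in Im q = 0 \<and> Re q \<ge> 0)"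

text \<open>(id_m (x) Phi)(X) for X on C^m (x) C^din.\<close>
definition id_tensor :: "nat \<Rightarrow> nat \<Rightarrow> nat \<Rightarrow> (complex mat \<Rightarrow> complex mat) \<Rightarrow> complex mat \<Rightarrow> complex mat" where
  "id_tensor m din dout Phi X = msum (m*dout) (m*dout)
     (\<lambda>(i,j). kron (ketbra m i j) (Phi (mat din din (\<lambda>(s,t). X $$ (i*din+s, j*din+t)))))
     ({..<m} \<times> {..<m})"

definition lin_map :: "nat \<Rightarrow> (complex mat \<Rightarrow> complex mat) \<Rightarrow> bool" where
  "lin_map din Phi \<longleftrightarrow> (\<forall>X\<in>carrier_mat din din. \<forall>Y\<in>carrier_mat din din. \<forall>c a.
       Phi (c \<cdot>\<^sub>m X + a \<cdot>\<^sub>m Y) = c \<cdot>\<^sub>m Phi X + a \<cdot>\<^sub>m Phi Y)"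

definition CPTP :: "nat \<Rightarrow> nat \<Rightarrow> (complex mat \<Rightarrow> complex mat) \<Rightarrow> bool" where
  "CPTP din dout Phi \<longleftrightarrow>
     lin_map din Phi \<and>
     (\<forall>X\<in>carrier_mat din din. Phi X \<in> carrier_mat dout dout) \<and>
     (\<forall>m\<ge>1. \<forall>X. psd (m*din) X \<longrightarrow> psd (m*dout) (id_tensor m din dout Phi X)) \<and>
     (\<forall>X\<in>carrier_mat din din. mtrace (Phi X) = mtrace X)"

definition is_process_matrix :: "nat \<Rightarrow> nat \<Rightarrow> nat \<Rightarrow> complex mat \<Rightarrow> bool" where
  "is_process_matrix dA dP dF W \<longleftrightarrow> CPTP dP dF (PMO dA dP dF W)"

definition chanUk :: "complex mat \<Rightarrow> nat \<Rightarrow> complex mat \<Rightarrow> complex mat" where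
  "chanUk V k = (\<lambda>\<rho>. V * kron \<rho> (ketbra (2^k) 0 0) * dagger V)"

text \<open>PMO and PMG of (n, C), where the circuit C enters only through its channel Ch,
  an (n+r)-to-(n+l) qubit map.\<close>
definition PMO_gen :: "nat \<Rightarrow> nat \<Rightarrow> nat \<Rightarrow> (complex mat \<Rightarrow> complex mat) \<Rightarrow> complex mat \<Rightarrow> complex mat" where
  "PMO_gen n r l Ch = PMO (2^n) (2^r) (2^l) (CJ (2^(n+r)) (2^(n+l)) Ch)"

definition is_PMG :: "nat \<Rightarrow> nat \<Rightarrow> nat \<Rightarrow> (complex mat \<Rightarrow> complex mat) \<Rightarrow> bool" where
  "is_PMG n r l Ch \<longleftrightarrow> n \<ge> 1 \<and> CPTP (2^r) (2^l) (PMO_gen n r l Ch)"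

end

theory Submission imports Defs begin

text \<open>The operator G keeps the blocks of W that are diagonal on A_I and A_O. For W the Choi
operator of \<rho> \<mapsto> U (\<rho> \<otimes> |0\<rangle>\<langle>0|) U^\<dagger>, with |0\<rangle> the ancilla state, the entry of W in row
(x,p,y,f) and column (x',p',y',f') is U[(y,f),(x,p,0)] \<cdot> conj U[(y',f'),(x',p',0)]. Summing it over
x = y and x' = y' factors into (\<Sum>x. U[(x,f),(x,p,0)]) \<cdot> conj (\<Sum>x'. U[(x',f'),(x',p',0)]), a product
of two entries of U_G = tr_{A_I} U, which is the corresponding entry of the Choi operator of
\<sigma> \<mapsto> U_G (\<sigma> \<otimes> |0\<rangle>\<langle>0|) U_G^\<dagger>. The remaining claims hold because the inverse Choi map inverts
the Choi map on linear maps, and because CJ and CPTP only see a map on its input carrier.\<close>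

lemma kron_dims [simp]:
  "dim_row (kron A B) = dim_row A * dim_row B" "dim_col (kron A B) = dim_col A * dim_col B"
  by (simp_all add: kron_def)

lemma kron_index:
  "i < dim_row A * dim_row B \<Longrightarrow> j < dim_col A * dim_col B \<Longrightarrow>
   kron A B $$ (i,j) = A $$ (i div dim_row B, j div dim_col B) * B $$ (i mod dim_row B, j mod dim_col B)"
  by (simp add: kron_def)

lemma dagger_dims [simp]: "dim_row (dagger A) = dim_col A" "dim_col (dagger A) = dim_row A"
  by (simp_all add: dagger_def)

lemma dagger_index [simp]:
  "i < dim_col A \<Longrightarrow> j < dim_row A \<Longrightarrow> dagger A $$ (i,j) = cnj (A $$ (j,i))"
  by (simp add: dagger_def)

lemma msum_dims [simp]: "dim_row (msum nr nc f S) = nr" "dim_col (msum nr nc f S) = nc"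
  by (simp_all add: msum_def)

lemma msum_index [simp]:
  "i < nr \<Longrightarrow> j < nc \<Longrightarrow> msum nr nc f S $$ (i,j) = (\<Sum>x\<in>S. f x $$ (i,j))"
  by (simp add: msum_def)

lemma ketbra_carrier [simp]: "ketbra d a b \<in> carrier_mat d d"
  by (simp add: ketbra_def)

lemma ketbra_dims [simp]: "dim_row (ketbra d a b) = d" "dim_col (ketbra d a b) = d"
  by (simp_all add: ketbra_def)

lemma index_mult_mat_sum:
  assumes "A \<in> carrier_mat m n" "B \<in> carrier_mat n p" "i < m" "j < p"
  shows "(A * B) $$ (i,j) = (\<Sum>e<n. A $$ (i,e) * B $$ (e,j))"
  using assms by (auto simp: scalar_prod_def lessThan_atLeast0 intro!: sum.cong)

section \<open>Mixed-radix indices\<close>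

lemma eq_mult_add_iff_div_mod:
  "m < (d::nat) \<Longrightarrow> (a = q * d + m) \<longleftrightarrow> (a div d = q \<and> a mod d = m)"
  by (metis add.commute div_mult_self1 div_less less_nat_zero_code add_0 mod_mult_self1 mod_less
      mod_div_mult_eq mult.commute)

lemma mult_add_inj:
  "q * d + m = q' * d + m' \<Longrightarrow> m < (d::nat) \<Longrightarrow> m' < d \<Longrightarrow> q = q' \<and> m = m'"
  by (metis eq_mult_add_iff_div_mod)

lemma mult_add_less_mult: "m < (d::nat) \<Longrightarrow> q < Q \<Longrightarrow> q * d + m < Q * d"
proof -
  assume "m < d" "q < Q"
  then have "q * d + m < (q + 1) * d" by simp
  also have "\<dots> \<le> Q * d" using \<open>q < Q\<close> by (intro mult_right_mono) auto
  finally show ?thesis .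
qed

lemma div_mod_less_mult:
  assumes "b < C1 * (C2::nat)"
  shows "b div C2 < C1" "b mod C2 < C2"
  using assms by (auto simp: less_mult_imp_div_less) (metis mod_less_divisor mult_0_right neq0_conv not_less0)

lemma sum_lessThan_mult: "(\<Sum>e<a * b. f e) = (\<Sum>y<(a::nat). \<Sum>m<b. f (y * b + m))"
proof -
  have "(\<Sum>e<a * b. f e) = (\<Sum>y<a. sum f {y * b..<y * b + b})" by (rule sum.nat_group[symmetric])
  also have "\<dots> = (\<Sum>y<a. \<Sum>m<b. f (y * b + m))"
  proof (rule sum.cong[OF refl])
    fix y
    have "sum f {0 + y * b..<b + y * b} = (\<Sum>m\<in>{0..<b}. f (m + y * b))" by (rule sum.shift_bounds_nat_ivl)
    then show "sum f {y * b..<y * b + b} = (\<Sum>m<b. f (y * b + m))" by (simp add: add.commute lessThan_atLeast0)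
  qed
  finally show ?thesis .
qed

text \<open>Index of the basis vector |x\<rangle>|p\<rangle>|y\<rangle>|f\<rangle> of A_I \<otimes> P \<otimes> A_O \<otimes> F, where b = p \<cdot> dF + f.\<close>

definition tensor4_index :: "nat \<Rightarrow> nat \<Rightarrow> nat \<Rightarrow> nat \<Rightarrow> nat \<Rightarrow> nat \<Rightarrow> nat" where
  "tensor4_index dA dP dF x y b = ((x * dP + b div dF) * dA + y) * dF + b mod dF"

lemma tensor4_index_less:
  assumes "x < dA" "y < dA" "b < dP * dF"
  shows "tensor4_index dA dP dF x y b < dA * dP * dA * dF"
proof -
  have dF: "dF > 0" using assms by (cases dF) auto
  have "b div dF < dP" using assms by (simp add: less_mult_imp_div_less)
  then have "x * dP + b div dF < dA * dP" using mult_add_less_mult assms by auto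
  then have "(x * dP + b div dF) * dA + y < dA * dP * dA" using mult_add_less_mult assms by auto
  then show ?thesis unfolding tensor4_index_def using mult_add_less_mult dF by auto
qed

lemma tensor4_index_inj:
  assumes "x < dA" "y < dA" "b < dP * dF" "x' < dA" "y' < dA" "b' < dP * dF"
    and eq: "tensor4_index dA dP dF x y b = tensor4_index dA dP dF x' y' b'"
  shows "x = x' \<and> y = y' \<and> b = b'"
proof -
  have dF: "dF > 0" using assms by (cases dF) auto
  have bd: "b div dF < dP" "b' div dF < dP" using assms by (simp_all add: less_mult_imp_div_less)
  from mult_add_inj[OF eq[unfolded tensor4_index_def]] dF
  have 1: "(x * dP + b div dF) * dA + y = (x' * dP + b' div dF) * dA + y'" "b mod dF = b' mod dF"
    by auto
  from mult_add_inj[OF 1(1)] assms have 2: "x * dP + b div dF = x' * dP + b' div dF" "y = y'" by auto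
  from mult_add_inj[OF 2(1)] bd have 3: "x = x'" "b div dF = b' div dF" by auto
  have "b = b'" using 1(2) 3(2) by (metis div_mult_mod_eq)
  then show ?thesis using 2 3 by auto
qed

lemma tensor4_index_div_mod:
  assumes "y < dA" "0 < dF"
  shows "tensor4_index dA dP dF x y i div (dA * dF) = x * dP + i div dF"
    and "tensor4_index dA dP dF x y i mod (dA * dF) = y * dF + i mod dF"
proof -
  have e: "tensor4_index dA dP dF x y i = (x * dP + i div dF) * (dA * dF) + (y * dF + i mod dF)"
    unfolding tensor4_index_def by (simp add: algebra_simps)
  have "y * dF + i mod dF < dA * dF" using mult_add_less_mult assms by auto
  then show "tensor4_index dA dP dF x y i div (dA * dF) = x * dP + i div dF"
    and "tensor4_index dA dP dF x y i mod (dA * dF) = y * dF + i mod dF"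
    using eq_mult_add_iff_div_mod e by auto
qed

section \<open>Selection matrices\<close>

text \<open>The sandwiches in the partial traces and in G are all of the form S^\<dagger> M S with S a
Kronecker product of kets and identities, i.e.\ a matrix whose columns are standard basis vectors.\<close>

definition selection_mat :: "nat \<Rightarrow> nat \<Rightarrow> (nat \<Rightarrow> nat) \<Rightarrow> complex mat \<Rightarrow> bool" where
  "selection_mat R C g S \<longleftrightarrow> S \<in> carrier_mat R C \<and> (\<forall>b<C. g b < R) \<and>
     (\<forall>a<R. \<forall>b<C. S $$ (a,b) = (if a = g b then 1 else 0))"

lemma selection_mat_cong:
  "selection_mat R C g S \<Longrightarrow> C = C' \<Longrightarrow> (\<And>b. b < C' \<Longrightarrow> g b = g' b) \<Longrightarrow> selection_mat R C' g' S"
  unfolding selection_mat_def by auto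

lemma mult_selection_mat_index:
  assumes "selection_mat R C g S" "M \<in> carrier_mat m R" "i < m" "j < C"
  shows "(M * S) $$ (i,j) = M $$ (i, g j)"
proof -
  have "(M * S) $$ (i,j) = (\<Sum>a<R. M $$ (i,a) * S $$ (a,j))"
    using assms unfolding selection_mat_def by (intro index_mult_mat_sum) auto
  also have "\<dots> = (\<Sum>a<R. if a = g j then M $$ (i,a) else 0)"
    using assms unfolding selection_mat_def by (intro sum.cong) auto
  finally show ?thesis using assms unfolding selection_mat_def by simp
qed

lemma dagger_selection_mat_mult_index:
  assumes "selection_mat R C g S" "M \<in> carrier_mat R m" "i < C" "j < m"
  shows "(dagger S * M) $$ (i,j) = M $$ (g i, j)"
proof -
  have "(dagger S * M) $$ (i,j) = (\<Sum>a<R. cnj (S $$ (a,i)) * M $$ (a,j))"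
    using assms unfolding selection_mat_def by (subst index_mult_mat_sum) auto
  also have "\<dots> = (\<Sum>a<R. if a = g i then M $$ (a,j) else 0)"
    using assms unfolding selection_mat_def by (intro sum.cong) auto
  finally show ?thesis using assms unfolding selection_mat_def by simp
qed

lemma selection_mat_sandwich_index:
  assumes S: "selection_mat R C g S" and M: "M \<in> carrier_mat R R" and "i < C" "j < C"
  shows "(dagger S * M * S) $$ (i,j) = M $$ (g i, g j)"
proof -
  have "dagger S * M \<in> carrier_mat C R" "g j < R" using assms unfolding selection_mat_def by auto
  then show ?thesis
    using assms by (simp add: mult_selection_mat_index[OF S] dagger_selection_mat_mult_index[OF S M])
qed

lemma selection_mat_ket: "x < d \<Longrightarrow> selection_mat d 1 (\<lambda>_. x) (ket d x)"
  by (auto simp: selection_mat_def ket_def)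

lemma selection_mat_one: "selection_mat d d (\<lambda>b. b) (1\<^sub>m d)"
  by (auto simp: selection_mat_def)

lemma selection_mat_kron:
  assumes S1: "selection_mat R1 C1 g1 S1" and S2: "selection_mat R2 C2 g2 S2"
  shows "selection_mat (R1 * R2) (C1 * C2) (\<lambda>b. g1 (b div C2) * R2 + g2 (b mod C2)) (kron S1 S2)"
  unfolding selection_mat_def
proof (intro conjI allI impI)
  have d: "dim_row S1 = R1" "dim_col S1 = C1" "dim_row S2 = R2" "dim_col S2 = C2"
    using assms unfolding selection_mat_def by auto
  then show "kron S1 S2 \<in> carrier_mat (R1 * R2) (C1 * C2)" by auto
  fix b assume b: "b < C1 * C2"
  then have g: "g1 (b div C2) < R1" "g2 (b mod C2) < R2"
    using div_mod_less_mult[OF b] assms unfolding selection_mat_def by auto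
  show "g1 (b div C2) * R2 + g2 (b mod C2) < R1 * R2" by (rule mult_add_less_mult[OF g(2) g(1)])
  fix a assume a: "a < R1 * R2"
  have "kron S1 S2 $$ (a, b) = S1 $$ (a div R2, b div C2) * S2 $$ (a mod R2, b mod C2)"
    using kron_index[of a S1 S2 b] a b d by simp
  also have "\<dots> = (if a div R2 = g1 (b div C2) \<and> a mod R2 = g2 (b mod C2) then 1 else 0)"
    using assms div_mod_less_mult[OF a] div_mod_less_mult[OF b] unfolding selection_mat_def by auto
  finally show "kron S1 S2 $$ (a, b) = (if a = g1 (b div C2) * R2 + g2 (b mod C2) then 1 else 0)"
    using eq_mult_add_iff_div_mod[OF g(2)] by simp
qed

lemma ptrace1_index:
  assumes "M \<in> carrier_mat (d0 * d1) (d0 * d1)" "i < d1" "j < d1"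
  shows "ptrace1 d0 d1 M $$ (i,j) = (\<Sum>x<d0. M $$ (x * d1 + i, x * d1 + j))"
proof -
  have S: "selection_mat (d0 * d1) d1 (\<lambda>b. x * d1 + b) (kron (ket d0 x) (1\<^sub>m d1))" if "x < d0" for x
    by (rule selection_mat_cong[OF selection_mat_kron[OF selection_mat_ket[OF that] selection_mat_one]]) auto
  show ?thesis unfolding ptrace1_def using assms by (simp add: selection_mat_sandwich_index[OF S])
qed

lemma selection_mat_tensor4:
  assumes "x < dA" "y < dA"
  shows "selection_mat (dA * dP * dA * dF) (dP * dF) (tensor4_index dA dP dF x y)
     (kron (kron (kron (ket dA x) (1\<^sub>m dP)) (ket dA y)) (1\<^sub>m dF))"
  by (rule selection_mat_cong[OF selection_mat_kron[OF selection_mat_kron[OF selection_mat_kron[OF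
        selection_mat_ket[OF assms(1)] selection_mat_one] selection_mat_ket[OF assms(2)]] selection_mat_one]])
    (auto simp: tensor4_index_def less_mult_imp_div_less)

section \<open>The operator G\<close>

lemma Kmat_carrier: "Kmat dA dP dF \<in> carrier_mat (dA * dP * dA * dF) (dP * dF)"
  unfolding Kmat_def carrier_mat_def by simp

lemma Kmat_index:
  assumes "e < dA * dP * dA * dF" "c < dP * dF"
  shows "Kmat dA dP dF $$ (e,c) = (\<Sum>z<dA. if e = tensor4_index dA dP dF z z c then 1 else 0)"
  using assms selection_mat_tensor4[of _ dA _ dP dF] unfolding Kmat_def selection_mat_def by simp

lemma Kmat_tensor4_index:
  assumes "x < dA" "y < dA" "j < dP * dF" "c < dP * dF"
  shows "Kmat dA dP dF $$ (tensor4_index dA dP dF x y j, c) = (if x = y \<and> c = j then 1 else 0)"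
proof -
  have "Kmat dA dP dF $$ (tensor4_index dA dP dF x y j, c) =
      (\<Sum>z<dA. if tensor4_index dA dP dF x y j = tensor4_index dA dP dF z z c then 1 else 0)"
    by (rule Kmat_index[OF tensor4_index_less[OF assms(1-3)] assms(4)])
  also have "\<dots> = (\<Sum>z<dA. if z = x \<and> x = y \<and> c = j then 1 else 0)"
    using tensor4_index_inj[OF assms(1-3), of _ _ c] assms by (intro sum.cong refl) auto
  finally show ?thesis using assms by (cases "x = y \<and> c = j") auto
qed

lemma mult_Kmat_index:
  assumes W: "W \<in> carrier_mat (dA * dP * dA * dF) (dA * dP * dA * dF)"
    and a: "a < dA * dP * dA * dF" and c: "c < dP * dF"
  shows "(W * Kmat dA dP dF) $$ (a,c) = (\<Sum>z<dA. W $$ (a, tensor4_index dA dP dF z z c))"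
proof -
  let ?N = "dA * dP * dA * dF" and ?e = "tensor4_index dA dP dF"
  have "(W * Kmat dA dP dF) $$ (a,c) = (\<Sum>e<?N. W $$ (a,e) * Kmat dA dP dF $$ (e,c))"
    using W a c Kmat_carrier by (intro index_mult_mat_sum)
  also have "\<dots> = (\<Sum>e<?N. \<Sum>z<dA. if e = ?e z z c then W $$ (a,e) else 0)"
    using c by (intro sum.cong) (auto simp: Kmat_index sum_distrib_left intro!: sum.cong)
  also have "\<dots> = (\<Sum>z<dA. \<Sum>e<?N. if e = ?e z z c then W $$ (a,e) else 0)"
    by (rule sum.swap)
  also have "\<dots> = (\<Sum>z<dA. W $$ (a, ?e z z c))"
    using tensor4_index_less c by (intro sum.cong) (auto simp:)
  finally show ?thesis .
qed

lemma Gop_index: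
  assumes W: "W \<in> carrier_mat (dA * dP * dA * dF) (dA * dP * dA * dF)"
    and i: "i < dP * dF" and j: "j < dP * dF"
  shows "Gop dA dP dF W $$ (i,j) =
    (\<Sum>x<dA. \<Sum>z<dA. W $$ (tensor4_index dA dP dF x x i, tensor4_index dA dP dF z z j))"
proof -
  let ?K = "Kmat dA dP dF" and ?e = "tensor4_index dA dP dF"
  have WK: "W * ?K \<in> carrier_mat (dA * dP * dA * dF) (dP * dF)" using W Kmat_carrier by auto
  have KD: "dagger ?K \<in> carrier_mat (dP * dF) (dA * dP * dA * dF)"
    using Kmat_carrier[of dA dP dF] by auto
  have M: "W * ?K * dagger ?K \<in> carrier_mat (dA * dP * dA * dF) (dA * dP * dA * dF)"
    using WK KD by auto
  have diag: "(W * ?K * dagger ?K) $$ (?e x y i, ?e x y j) = (if x = y then (W * ?K) $$ (?e x x i, j) else 0)"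
    if "x < dA" "y < dA" for x y
  proof -
    have "(W * ?K * dagger ?K) $$ (?e x y i, ?e x y j) =
        (\<Sum>c<dP * dF. (W * ?K) $$ (?e x y i, c) * cnj (?K $$ (?e x y j, c)))"
      using that i j Kmat_carrier[of dA dP dF] tensor4_index_less
      by (auto simp: index_mult_mat_sum[OF WK KD] intro!: sum.cong)
    also have "\<dots> = (\<Sum>c<dP * dF. if c = j then (if x = y then (W * ?K) $$ (?e x x i, j) else 0) else 0)"
      using that j by (intro sum.cong) (auto simp: Kmat_tensor4_index)
    finally show ?thesis using j by simp
  qed
  have "Gop dA dP dF W $$ (i,j) = (\<Sum>(x,y)\<in>{..<dA}\<times>{..<dA}. (W * ?K * dagger ?K) $$ (?e x y i, ?e x y j))"
    unfolding Gop_def ptrace_AIAO_def using i j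
    by (auto simp: Let_def selection_mat_sandwich_index[OF selection_mat_tensor4 M] intro!: sum.cong)
  also have "\<dots> = (\<Sum>x<dA. \<Sum>y<dA. (W * ?K * dagger ?K) $$ (?e x y i, ?e x y j))"
    by (simp add: sum.cartesian_product)
  also have "\<dots> = (\<Sum>x<dA. \<Sum>y<dA. if x = y then (W * ?K) $$ (?e x x i, j) else 0)"
    by (intro sum.cong refl diag) auto
  also have "\<dots> = (\<Sum>x<dA. \<Sum>z<dA. W $$ (?e x x i, ?e z z j))"
    using W i j tensor4_index_less by (simp add: mult_Kmat_index)
  finally show ?thesis .
qed

lemma CJ_carrier: "CJ da db C \<in> carrier_mat (da * db) (da * db)"
  unfolding CJ_def carrier_mat_def by simp

lemma CJ_index:
  assumes C: "\<And>s t. s < da \<Longrightarrow> t < da \<Longrightarrow> C (ketbra da s t) \<in> carrier_mat db db"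
    and a: "a < da * db" and b: "b < da * db"
  shows "CJ da db C $$ (a,b) = C (ketbra da (a div db) (b div db)) $$ (a mod db, b mod db)"
proof -
  have ad: "a div db < da" "b div db < da" using a b by (simp_all add: less_mult_imp_div_less)
  have entry: "kron (ketbra da s t) (C (ketbra da s t)) $$ (a,b) =
      (if s = a div db then if t = b div db then C (ketbra da s t) $$ (a mod db, b mod db) else 0 else 0)"
    if "s < da" "t < da" for s t
  proof -
    have "dim_row (C (ketbra da s t)) = db" "dim_col (C (ketbra da s t)) = db" using C[OF that] by auto
    then have "kron (ketbra da s t) (C (ketbra da s t)) $$ (a,b) =
        ketbra da s t $$ (a div db, b div db) * C (ketbra da s t) $$ (a mod db, b mod db)"
      using a b by (simp add: kron_index)
    then show ?thesis using ad by (simp add: ketbra_def)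
  qed
  have "CJ da db C $$ (a,b) = (\<Sum>s<da. \<Sum>t<da. kron (ketbra da s t) (C (ketbra da s t)) $$ (a,b))"
    unfolding CJ_def using a b by (simp add: case_prod_unfold sum.cartesian_product)
  also have "\<dots> = (\<Sum>s<da. if s = a div db then
      (\<Sum>t<da. if t = b div db then C (ketbra da s t) $$ (a mod db, b mod db) else 0) else 0)"
    by (intro sum.cong refl) (simp add: entry)
  also have "\<dots> = C (ketbra da (a div db) (b div db)) $$ (a mod db, b mod db)"
    using ad by simp
  finally show ?thesis .
qed

lemma Gop_CJ_index:
  assumes C: "\<And>X. X \<in> carrier_mat (dA * dP) (dA * dP) \<Longrightarrow> C X \<in> carrier_mat (dA * dF) (dA * dF)"
    and i: "i < dP * dF" and j: "j < dP * dF"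
  shows "Gop dA dP dF (CJ (dA * dP) (dA * dF) C) $$ (i,j) =
    (\<Sum>x<dA. \<Sum>z<dA. C (ketbra (dA * dP) (x * dP + i div dF) (z * dP + j div dF))
                          $$ (x * dF + i mod dF, z * dF + j mod dF))"
proof -
  have dF: "0 < dF" using i by (cases dF) auto
  have W: "CJ (dA * dP) (dA * dF) C \<in> carrier_mat (dA * dP * dA * dF) (dA * dP * dA * dF)"
    using CJ_carrier[of "dA * dP" "dA * dF" C] by (simp add: mult.assoc)
  have "CJ (dA * dP) (dA * dF) C $$ (tensor4_index dA dP dF x x i, tensor4_index dA dP dF z z j) =
      C (ketbra (dA * dP) (x * dP + i div dF) (z * dP + j div dF)) $$ (x * dF + i mod dF, z * dF + j mod dF)"
    if "x < dA" "z < dA" for x z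
    using CJ_index[of "dA * dP" C "dA * dF"] C tensor4_index_div_mod[OF _ dF] that
      tensor4_index_less[OF that(1) that(1) i] tensor4_index_less[OF that(2) that(2) j]
    by (simp add: mult.assoc)
  then show ?thesis using Gop_index[OF W i j] by simp
qed

section \<open>The channel with ancillas\<close>

lemma ketbra_sandwich_index:
  assumes A: "A \<in> carrier_mat m d" and ab: "a < d" "b < d" and uv: "u < m" "v < m"
  shows "(A * ketbra d a b * dagger A) $$ (u,v) = A $$ (u,a) * cnj (A $$ (v,b))"
proof -
  have left: "(A * ketbra d a b) $$ (u,w) = (if w = b then A $$ (u,a) else 0)" if "w < d" for w
  proof -
    have "(A * ketbra d a b) $$ (u,w) = (\<Sum>e<d. A $$ (u,e) * ketbra d a b $$ (e,w))"
      using A uv that by (intro index_mult_mat_sum) auto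
    also have "\<dots> = (\<Sum>e<d. if e = a then (if w = b then A $$ (u,a) else 0) else 0)"
      using that by (intro sum.cong) (auto simp: ketbra_def)
    finally show ?thesis using ab by simp
  qed
  have "(A * ketbra d a b * dagger A) $$ (u,v) = (\<Sum>w<d. (A * ketbra d a b) $$ (u,w) * cnj (A $$ (v,w)))"
    using A uv by (subst index_mult_mat_sum) auto
  also have "\<dots> = (\<Sum>w<d. if w = b then A $$ (u,a) * cnj (A $$ (v,b)) else 0)"
    by (intro sum.cong) (auto simp: left)
  finally show ?thesis using ab by simp
qed

lemma kron_ketbra_ketbra_zero:
  assumes "s < d1" "t < d1" "(0::nat) < d2"
  shows "kron (ketbra d1 s t) (ketbra d2 0 0) = ketbra (d1 * d2) (s * d2) (t * d2)"
proof (rule eq_matI)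
  fix i j assume "i < dim_row (ketbra (d1 * d2) (s * d2) (t * d2))"
    "j < dim_col (ketbra (d1 * d2) (s * d2) (t * d2))"
  then have i: "i < d1 * d2" and j: "j < d1 * d2" by simp_all
  have "kron (ketbra d1 s t) (ketbra d2 0 0) $$ (i,j) =
      (if (i div d2 = s \<and> i mod d2 = 0) \<and> (j div d2 = t \<and> j mod d2 = 0) then 1 else 0)"
    using i j assms by (auto simp: kron_index ketbra_def less_mult_imp_div_less)
  then show "kron (ketbra d1 s t) (ketbra d2 0 0) $$ (i,j) = ketbra (d1 * d2) (s * d2) (t * d2) $$ (i,j)"
    using i j eq_mult_add_iff_div_mod[of 0 d2] assms by (simp add: ketbra_def)
qed auto

lemma ancilla_sandwich_ketbra_index:
  assumes V: "V \<in> carrier_mat m (d * dK)" and dK: "0 < dK"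
    and st: "s < d" "t < d" and uv: "u < m" "v < m"
  shows "(V * kron (ketbra d s t) (ketbra dK 0 0) * dagger V) $$ (u,v) =
    V $$ (u, s * dK) * cnj (V $$ (v, t * dK))"
proof -
  have "s * dK < d * dK" "t * dK < d * dK" using st dK by simp_all
  then show ?thesis using kron_ketbra_ketbra_zero[OF st dK] ketbra_sandwich_index[OF V _ _ uv] by simp
qed

lemma Gop_CJ_ancilla_sandwich:
  assumes U: "U \<in> carrier_mat (dA * dF) (dA * dF)" and dF: "dF = dP * dK" and dK: "0 < dK"
  shows "Gop dA dP dF (CJ (dA * dP) (dA * dF) (\<lambda>\<rho>. U * kron \<rho> (ketbra dK 0 0) * dagger U))
       = CJ dP dF (\<lambda>\<sigma>. ptrace1 dA dF U * kron \<sigma> (ketbra dK 0 0) * dagger (ptrace1 dA dF U))"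
    (is "Gop dA dP dF (CJ _ _ ?C) = CJ dP dF ?CG")
proof (rule eq_matI)
  let ?W = "CJ (dA * dP) (dA * dF) ?C" and ?UG = "ptrace1 dA dF U"
  have U': "U \<in> carrier_mat (dA * dF) ((dA * dP) * dK)" using U dF by (simp add: mult.assoc)
  have UG: "?UG \<in> carrier_mat dF (dP * dK)" using dF unfolding ptrace1_def carrier_mat_def by simp
  have C: "?C X \<in> carrier_mat (dA * dF) (dA * dF)" if "X \<in> carrier_mat (dA * dP) (dA * dP)" for X
    using U' that by auto
  show "dim_row (Gop dA dP dF ?W) = dim_row (CJ dP dF ?CG)"
    "dim_col (Gop dA dP dF ?W) = dim_col (CJ dP dF ?CG)"
    by (simp_all add: Gop_def ptrace_AIAO_def CJ_def)
  fix i j assume "i < dim_row (CJ dP dF ?CG)" "j < dim_col (CJ dP dF ?CG)"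
  then have i: "i < dP * dF" and j: "j < dP * dF" by (simp_all add: CJ_def)
  have dF0: "0 < dF" using i by (cases dF) auto
  have qr: "q div dF < dP" "q mod dF < dF" if "q < dP * dF" for q
    using that dF0 by (simp_all add: less_mult_imp_div_less)
  have C_entry:
    "?C (ketbra (dA * dP) (x * dP + q div dF) (z * dP + q' div dF)) $$ (x * dF + q mod dF, z * dF + q' mod dF)
      = U $$ (x * dF + q mod dF, x * dF + (q div dF) * dK) *
        cnj (U $$ (z * dF + q' mod dF, z * dF + (q' div dF) * dK))"
    if "x < dA" "z < dA" "q < dP * dF" "q' < dP * dF" for x z q q'
  proof -
    have "x * dP + q div dF < dA * dP" "z * dP + q' div dF < dA * dP"
      "x * dF + q mod dF < dA * dF" "z * dF + q' mod dF < dA * dF"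
      using that qr[OF that(3)] qr[OF that(4)] by (simp_all add: mult_add_less_mult)
    then show ?thesis using dF by (simp add: ancilla_sandwich_ketbra_index[OF U' dK] algebra_simps)
  qed
  have UG_entry:
    "(\<Sum>x<dA. U $$ (x * dF + q mod dF, x * dF + (q div dF) * dK)) = ?UG $$ (q mod dF, (q div dF) * dK)"
    if "q < dP * dF" for q
  proof -
    have "(q div dF) * dK < dF" using qr[OF that] dF dK by simp
    then show ?thesis using ptrace1_index[OF U] qr[OF that] by simp
  qed
  have "Gop dA dP dF ?W $$ (i,j) =
      (\<Sum>x<dA. \<Sum>z<dA. U $$ (x * dF + i mod dF, x * dF + (i div dF) * dK) *
                        cnj (U $$ (z * dF + j mod dF, z * dF + (j div dF) * dK)))"
    by (simp add: Gop_CJ_index[OF C i j] C_entry i j)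
  also have "\<dots> = (\<Sum>x<dA. U $$ (x * dF + i mod dF, x * dF + (i div dF) * dK)) *
      cnj (\<Sum>z<dA. U $$ (z * dF + j mod dF, z * dF + (j div dF) * dK))"
    by (simp add: sum_product)
  also have "\<dots> = ?UG $$ (i mod dF, (i div dF) * dK) * cnj (?UG $$ (j mod dF, (j div dF) * dK))"
    by (simp only: UG_entry i j)
  also have "\<dots> = ?CG (ketbra dP (i div dF) (j div dF)) $$ (i mod dF, j mod dF)"
    using qr[OF i] qr[OF j] by (simp add: ancilla_sandwich_ketbra_index[OF UG dK])
  also have "\<dots> = CJ dP dF ?CG $$ (i,j)"
    using UG dF by (intro CJ_index[symmetric] i j) auto
  finally show "Gop dA dP dF ?W $$ (i,j) = CJ dP dF ?CG $$ (i,j)" .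
qed

section \<open>Linear maps and the inverse Choi map\<close>

lemma lin_mapD:
  "lin_map din Phi \<Longrightarrow> X \<in> carrier_mat din din \<Longrightarrow> Y \<in> carrier_mat din din \<Longrightarrow>
   Phi (c \<cdot>\<^sub>m X + a \<cdot>\<^sub>m Y) = c \<cdot>\<^sub>m Phi X + a \<cdot>\<^sub>m Phi Y"
  unfolding lin_map_def by blast

lemma lin_map_smult:
  assumes L: "lin_map din Phi"
    and car: "\<And>X. X \<in> carrier_mat din din \<Longrightarrow> Phi X \<in> carrier_mat dout dout"
    and X: "X \<in> carrier_mat din din"
  shows "Phi (c \<cdot>\<^sub>m X) = c \<cdot>\<^sub>m Phi X"
proof -
  have "c \<cdot>\<^sub>m X + 0 \<cdot>\<^sub>m X = c \<cdot>\<^sub>m X" "c \<cdot>\<^sub>m Phi X + 0 \<cdot>\<^sub>m Phi X = c \<cdot>\<^sub>m Phi X"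
    using X car[OF X] by auto
  then show ?thesis using lin_mapD[OF L X X, of c 0] by simp
qed

lemma lin_map_zero:
  assumes L: "lin_map din Phi"
    and car: "\<And>X. X \<in> carrier_mat din din \<Longrightarrow> Phi X \<in> carrier_mat dout dout"
  shows "Phi (0\<^sub>m din din) = 0\<^sub>m dout dout"
proof -
  have "Phi (0\<^sub>m din din) = Phi (0 \<cdot>\<^sub>m 0\<^sub>m din din)" by simp
  also have "\<dots> = 0 \<cdot>\<^sub>m Phi (0\<^sub>m din din)" by (rule lin_map_smult[OF L car zero_carrier_mat])
  also have "\<dots> = 0\<^sub>m dout dout" using car[of "0\<^sub>m din din"] by auto
  finally show ?thesis .
qed

lemma lin_map_msum:
  assumes L: "lin_map din Phi"
    and car: "\<And>X. X \<in> carrier_mat din din \<Longrightarrow> Phi X \<in> carrier_mat dout dout"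
    and S: "finite S" and f: "\<And>s. s \<in> S \<Longrightarrow> f s \<in> carrier_mat din din"
  shows "Phi (msum din din f S) = msum dout dout (\<lambda>s. Phi (f s)) S"
  using S f
proof (induction S rule: finite_induct)
  case empty
  have "msum din din f {} = 0\<^sub>m din din" "msum dout dout (\<lambda>s. Phi (f s)) {} = 0\<^sub>m dout dout"
    by auto
  then show ?case using lin_map_zero[OF L car] by simp
next
  case (insert s S)
  have fs: "f s \<in> carrier_mat din din" using insert.prems by blast
  have pfs: "Phi (f s) \<in> carrier_mat dout dout" by (rule car[OF fs])
  have ms: "msum din din f S \<in> carrier_mat din din" unfolding carrier_mat_def by simp
  have split_in: "msum din din f (insert s S) = 1 \<cdot>\<^sub>m f s + 1 \<cdot>\<^sub>m msum din din f S"
    using fs insert.hyps by auto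
  have split_out: "msum dout dout (\<lambda>s. Phi (f s)) (insert s S) =
      1 \<cdot>\<^sub>m Phi (f s) + 1 \<cdot>\<^sub>m msum dout dout (\<lambda>s. Phi (f s)) S"
    using pfs insert.hyps by auto
  have "Phi (msum din din f (insert s S)) = 1 \<cdot>\<^sub>m Phi (f s) + 1 \<cdot>\<^sub>m Phi (msum din din f S)"
    unfolding split_in by (rule lin_mapD[OF L fs ms])
  then show ?case using insert.IH insert.prems split_out by simp
qed

lemma mat_eq_msum_ketbra:
  assumes X: "X \<in> carrier_mat d d"
  shows "X = msum d d (\<lambda>(y,x). X $$ (y,x) \<cdot>\<^sub>m ketbra d y x) ({..<d} \<times> {..<d})"
proof (rule eq_matI)
  fix i j assume "i < dim_row (msum d d (\<lambda>(y,x). X $$ (y,x) \<cdot>\<^sub>m ketbra d y x) ({..<d} \<times> {..<d}))"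
    "j < dim_col (msum d d (\<lambda>(y,x). X $$ (y,x) \<cdot>\<^sub>m ketbra d y x) ({..<d} \<times> {..<d}))"
  then have i: "i < d" and j: "j < d" by auto
  have "msum d d (\<lambda>(y,x). X $$ (y,x) \<cdot>\<^sub>m ketbra d y x) ({..<d} \<times> {..<d}) $$ (i,j)
      = (\<Sum>y<d. \<Sum>x<d. (X $$ (y,x) \<cdot>\<^sub>m ketbra d y x) $$ (i,j))"
    using i j by (simp add: sum.cartesian_product case_prod_unfold)
  also have "\<dots> = (\<Sum>y<d. \<Sum>x<d. if x = j then (if y = i then X $$ (i,j) else 0) else 0)"
    using i j by (intro sum.cong refl) (auto simp: ketbra_def)
  also have "\<dots> = X $$ (i,j)" using i j by simp
  finally show "X $$ (i,j) = msum d d (\<lambda>(y,x). X $$ (y,x) \<cdot>\<^sub>m ketbra d y x) ({..<d} \<times> {..<d}) $$ (i,j)"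
    by simp
qed (use X in auto)

lemma lin_map_eq_msum_ketbra:
  assumes L: "lin_map din Phi"
    and car: "\<And>X. X \<in> carrier_mat din din \<Longrightarrow> Phi X \<in> carrier_mat dout dout"
    and X: "X \<in> carrier_mat din din"
  shows "Phi X = msum dout dout (\<lambda>(y,x). X $$ (y,x) \<cdot>\<^sub>m Phi (ketbra din y x)) ({..<din} \<times> {..<din})"
proof -
  have "Phi X = msum dout dout (\<lambda>s. Phi ((\<lambda>(y,x). X $$ (y,x) \<cdot>\<^sub>m ketbra din y x) s)) ({..<din} \<times> {..<din})"
    by (subst mat_eq_msum_ketbra[OF X]) (auto intro: lin_map_msum[OF L car])
  also have "\<dots> = msum dout dout (\<lambda>(y,x). X $$ (y,x) \<cdot>\<^sub>m Phi (ketbra din y x)) ({..<din} \<times> {..<din})"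
    by (simp add: case_prod_unfold lin_map_smult[OF L car])
  finally show ?thesis .
qed

lemma CJinv_CJ_index:
  assumes car: "\<And>X. X \<in> carrier_mat din din \<Longrightarrow> Phi X \<in> carrier_mat dout dout"
    and X: "X \<in> carrier_mat din din" and i: "i < dout" and j: "j < dout"
  shows "CJinv din dout (CJ din dout Phi) X $$ (i,j) =
    (\<Sum>y<din. \<Sum>x<din. X $$ (y,x) * Phi (ketbra din y x) $$ (i,j))"
proof -
  let ?M = "CJ din dout Phi" and ?T = "kron (transpose_mat X) (1\<^sub>m dout)"
  have T: "?T \<in> carrier_mat (din * dout) (din * dout)" using X by auto
  have M: "?M \<in> carrier_mat (din * dout) (din * dout)" by (rule CJ_carrier)
  have T_entry: "?T $$ (x * dout + i, y * dout + m) = (if m = i then X $$ (y,x) else 0)"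
    if "x < din" "y < din" "m < dout" for x y m
    using kron_index[of "x * dout + i" "transpose_mat X" "1\<^sub>m dout" "y * dout + m"] X i that
    by (auto simp: mult_add_less_mult)
  have M_entry: "?M $$ (y * dout + i, x * dout + j) = Phi (ketbra din y x) $$ (i,j)"
    if "y < din" "x < din" for x y
    using CJ_index[of din Phi dout] car i j that by (simp add: mult_add_less_mult)
  have diag: "(?T * ?M) $$ (x * dout + i, x * dout + j) =
      (\<Sum>y<din. X $$ (y,x) * Phi (ketbra din y x) $$ (i,j))" if x: "x < din" for x
  proof -
    have "(?T * ?M) $$ (x * dout + i, x * dout + j) =
        (\<Sum>e<din * dout. ?T $$ (x * dout + i, e) * ?M $$ (e, x * dout + j))"
      using x i j by (intro index_mult_mat_sum[OF T M]) (simp_all add: mult_add_less_mult)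
    also have "\<dots> = (\<Sum>y<din. \<Sum>m<dout.
        ?T $$ (x * dout + i, y * dout + m) * ?M $$ (y * dout + m, x * dout + j))"
      by (rule sum_lessThan_mult)
    also have "\<dots> = (\<Sum>y<din. \<Sum>m<dout.
        if m = i then X $$ (y,x) * Phi (ketbra din y x) $$ (i,j) else 0)"
      using x by (intro sum.cong refl) (simp add: T_entry M_entry)
    finally show ?thesis using i by simp
  qed
  have "CJinv din dout ?M X $$ (i,j) = (\<Sum>x<din. (?T * ?M) $$ (x * dout + i, x * dout + j))"
    unfolding CJinv_def using T M i j by (intro ptrace1_index) auto
  also have "\<dots> = (\<Sum>x<din. \<Sum>y<din. X $$ (y,x) * Phi (ketbra din y x) $$ (i,j))"
    by (intro sum.cong refl diag) simp
  finally show ?thesis by (rule trans) (rule sum.swap)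
qed

lemma CJinv_CJ:
  assumes L: "lin_map din Phi"
    and car: "\<And>X. X \<in> carrier_mat din din \<Longrightarrow> Phi X \<in> carrier_mat dout dout"
    and X: "X \<in> carrier_mat din din"
  shows "CJinv din dout (CJ din dout Phi) X = Phi X"
proof (rule eq_matI)
  have PX: "Phi X \<in> carrier_mat dout dout" by (rule car[OF X])
  then show "dim_row (CJinv din dout (CJ din dout Phi) X) = dim_row (Phi X)"
    "dim_col (CJinv din dout (CJ din dout Phi) X) = dim_col (Phi X)"
    by (simp_all add: CJinv_def ptrace1_def)
  fix i j assume "i < dim_row (Phi X)" "j < dim_col (Phi X)"
  then have i: "i < dout" and j: "j < dout" using PX by auto
  have "dim_row (Phi (ketbra din y x)) = dout" "dim_col (Phi (ketbra din y x)) = dout" for y x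
    using car[OF ketbra_carrier] by auto
  then show "CJinv din dout (CJ din dout Phi) X $$ (i,j) = Phi X $$ (i,j)"
    using i j by (simp add: CJinv_CJ_index[OF car X i j] lin_map_eq_msum_ketbra[OF L car X]
        case_prod_unfold sum.cartesian_product)
qed

lemma CPTP_cong:
  assumes "\<And>X. X \<in> carrier_mat din din \<Longrightarrow> Phi X = Psi X"
  shows "CPTP din dout Phi = CPTP din dout Psi"
proof -
  have "lin_map din Phi = lin_map din Psi" unfolding lin_map_def by (auto simp: assms)
  moreover have "id_tensor m din dout Phi X = id_tensor m din dout Psi X" for m X
    unfolding id_tensor_def by (simp add: assms case_prod_unfold)
  ultimately show ?thesis unfolding CPTP_def by (auto simp: assms)
qed

lemma CJ_cong:
  assumes "\<And>X. X \<in> carrier_mat da da \<Longrightarrow> C X = C' X"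
  shows "CJ da db C = CJ da db C'"
  unfolding CJ_def by (simp add: assms case_prod_unfold)

lemma process_matrix_if_Gop_eq_CJ:
  assumes G: "Gop dA dP dF W = CJ dP dF Phi" and C: "CPTP dP dF Phi"
  shows "is_process_matrix dA dP dF W"
    and "\<And>X. X \<in> carrier_mat dP dP \<Longrightarrow> PMO dA dP dF W X = Phi X"
proof -
  have L: "lin_map dP Phi" and car: "\<And>X. X \<in> carrier_mat dP dP \<Longrightarrow> Phi X \<in> carrier_mat dF dF"
    using C unfolding CPTP_def by blast+
  show PMO: "PMO dA dP dF W X = Phi X" if "X \<in> carrier_mat dP dP" for X
    unfolding PMO_def G by (rule CJinv_CJ[OF L car that])
  show "is_process_matrix dA dP dF W"
    unfolding is_process_matrix_def using C CPTP_cong[of dP "PMO dA dP dF W" Phi dF] PMO by simp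
qed

theorem mainTheorem4:
  fixes n r k :: nat and U :: "complex mat"
  assumes "n \<ge> 1" and "r \<ge> 1"
    and "unitary_mat (2^(n+r+k)) U"
  defines "W \<equiv> CJ (2^(n+r)) (2^(n+r+k)) (chanUk U k)"
    and "UG \<equiv> ptrace1 (2^n) (2^(r+k)) U"
  shows "Gop (2^n) (2^r) (2^(r+k)) W = CJ (2^r) (2^(r+k)) (chanUk UG k)
    \<and> (CPTP (2^r) (2^(r+k)) (chanUk UG k) \<longrightarrow>
         is_process_matrix (2^n) (2^r) (2^(r+k)) W
       \<and> (\<forall>Ch. (\<forall>\<rho>\<in>carrier_mat (2^(n+r)) (2^(n+r)). Ch \<rho> = chanUk U k \<rho>) \<longrightarrow>
              is_PMG n r (r+k) Ch
            \<and> (\<forall>\<sigma>\<in>carrier_mat (2^r) (2^r). PMO_gen n r (r+k) Ch \<sigma> = chanUk UG k \<sigma>)))"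
proof -
  have dims: "(2::nat)^(n+r) = 2^n * 2^r" "(2::nat)^(n+r+k) = 2^n * 2^(r+k)"
    "(2::nat)^(r+k) = 2^r * 2^k"
    by (simp_all add: power_add)
  have "U \<in> carrier_mat (2^n * 2^(r+k)) (2^n * 2^(r+k))"
    using assms(3) unfolding unitary_mat_def dims by blast
  from Gop_CJ_ancilla_sandwich[OF this dims(3)]
  have G: "Gop (2^n) (2^r) (2^(r+k)) W = CJ (2^r) (2^(r+k)) (chanUk UG k)"
    unfolding W_def UG_def chanUk_def dims(1,2) by simp
  have PMO_gen_eq: "PMO_gen n r (r+k) Ch = PMO (2^n) (2^r) (2^(r+k)) W"
    if "\<forall>\<rho>\<in>carrier_mat (2^(n+r)) (2^(n+r)). Ch \<rho> = chanUk U k \<rho>" for Ch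
    using CJ_cong[of "2^(n+r)" Ch "chanUk U k" "2^(n+(r+k))"] that
    unfolding PMO_gen_def W_def by (simp add: add.assoc)
  show ?thesis
    using G process_matrix_if_Gop_eq_CJ[OF G] PMO_gen_eq assms(1)
    unfolding is_PMG_def is_process_matrix_def by simp
qed

end
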